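(* Let $h\in C[0,1]$ and $q\in C[0,1]$ with $q>0$ on $(0,1)$. Let $(c_n)_n\subset\mathbb R$ with $c_n\to c\in\mathbb R$, and for each $n$ let $z_n\in C[0,1]\cap C^1(0,1)$ satisfy $\dot z_n(\varphi)=h(\varphi)-c_n-q(\varphi)/z_n(\varphi)$ and $z_n(\varphi)<0$ for $\varphi\in(0,1)$. Suppose either (a) $(z_n)_n$ is pointwise increasing in $n$ and there is $v\in C[0,1]$ with $z_n(\varphi)\le v(\varphi)<0$ for all $n$ and $\varphi\in(0,1)$; or (b) $(z_n)_n$ is pointwise decreasing in $n$ and there is $w\in C[0,1]$ with $z_n(\varphi)\ge w(\varphi)$ for all $n$ and $\varphi\in(0,1)$. Then $z_n$ converges uniformly on $[0,1]$ to some $\bar z\in C[0,1]\cap C^1(0,1)$ satisfying $\dot{\bar z}(\varphi)=h(\varphi)-c-q(\varphi)/\bar z(\varphi)$ and $\bar z(\varphi)<0$ for $\varphi\in(0,1)$. *)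

theory Defs
  imports "HOL-Analysis.Analysis"
begin

end

theory Submission
  imports Defs
begin

text \<open>Each \<open>z\<^sub>n\<close> is trapped between two continuous functions and the sequence is monotone, so it
  converges pointwise on \<open>[0,1]\<close> and is uniformly bounded. The equation is singular where
  \<open>z\<^sub>n\<close> vanishes, but \<open>(z\<^sub>n\<^sup>2)' = 2 z\<^sub>n (h - c\<^sub>n) - 2 q\<close> is bounded uniformly in \<open>n\<close>;
  since \<open>z\<^sub>n \<le> 0\<close> we have \<open>|z\<^sub>n x - z\<^sub>n y| \<le> \<surd>|z\<^sub>n x\<^sup>2 - z\<^sub>n y\<^sup>2|\<close>, so the \<open>z\<^sub>n\<close> are uniformly
  Hoelder-\<open>1/2\<close> continuous and the convergence is uniform. On compact subintervals of \<open>(0,1)\<close>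
  the limit is bounded away from \<open>0\<close>, so the right-hand sides converge uniformly there as well and
  the limit solves the limiting equation.\<close>

lemma le_on_Icc_if_le_on_Ioo:
  fixes f g :: "real \<Rightarrow> real"
  assumes "a < b" and "continuous_on {a..b} f" and "continuous_on {a..b} g"
    and "\<And>x. x \<in> {a<..<b} \<Longrightarrow> f x \<le> g x" and "x \<in> {a..b}"
  shows "f x \<le> g x"
proof -
  have "continuous_on (closure {a<..<b}) (\<lambda>x. f x - g x)"
    using assms by (simp add: continuous_on_diff)
  then have "f x - g x \<le> 0"
    by (rule continuous_le_on_closure) (use assms in auto)
  then show ?thesis by simp
qed

lemma abs_diff_le_sqrt_abs_diff_squares:
  fixes a b :: real
  assumes "0 \<le> a * b"
  shows "\<bar>a - b\<bar> \<le> sqrt \<bar>a\<^sup>2 - b\<^sup>2\<bar>"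
proof (rule real_le_rsqrt)
  have "\<bar>a - b\<bar> \<le> \<bar>a + b\<bar>"
    using assms by (cases "a \<ge> 0"; cases "b \<ge> 0") (auto simp: zero_le_mult_iff)
  then have "\<bar>a - b\<bar> * \<bar>a - b\<bar> \<le> \<bar>a - b\<bar> * \<bar>a + b\<bar>"
    by (intro mult_left_mono) auto
  also have "\<dots> = \<bar>a\<^sup>2 - b\<^sup>2\<bar>"
    by (simp add: abs_mult[symmetric] power2_eq_square algebra_simps)
  finally show "\<bar>a - b\<bar>\<^sup>2 \<le> \<bar>a\<^sup>2 - b\<^sup>2\<bar>"
    by (simp only: power2_eq_square)
qed

lemma lipschitz_on_Icc_if_deriv_bounded:
  fixes f :: "real \<Rightarrow> real"
  assumes "a < b" and "continuous_on {a..b} f"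
    and "\<And>x. x \<in> {a<..<b} \<Longrightarrow> (f has_real_derivative f' x) (at x)"
    and "\<And>x. x \<in> {a<..<b} \<Longrightarrow> \<bar>f' x\<bar> \<le> C" and "0 \<le> C"
  shows "C-lipschitz_on {a..b} f"
proof -
  have "C-lipschitz_on {a<..<b} f"
  proof (rule bounded_derivative_imp_lipschitz)
    show "(f has_derivative (*) (f' x)) (at x within {a<..<b})" if "x \<in> {a<..<b}" for x
      using assms(3)[OF that] by (simp add: has_field_derivative_def has_derivative_at_withinI)
    show "onorm ((*) (f' x)) \<le> C" if "x \<in> {a<..<b}" for x
      by (rule onorm_le) (use assms(4)[OF that] in \<open>simp add: abs_mult mult_right_mono\<close>)
  qed (use assms in auto)
  then show ?thesis
    using lipschitz_on_closure[of C "{a<..<b}" f] assms(1,2) by simp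
qed

lemma dist_le_sqrt_if_square_lipschitz:
  fixes f :: "'a::metric_space \<Rightarrow> real"
  assumes "C-lipschitz_on S (\<lambda>x. (f x)\<^sup>2)" and "\<And>x. x \<in> S \<Longrightarrow> f x \<le> 0"
    and "x \<in> S" and "y \<in> S"
  shows "dist (f x) (f y) \<le> sqrt (C * dist x y)"
proof -
  have "dist (f x) (f y) \<le> sqrt \<bar>(f x)\<^sup>2 - (f y)\<^sup>2\<bar>"
    using abs_diff_le_sqrt_abs_diff_squares[of "f x" "f y"] assms(2-4)
    by (simp add: dist_real_def zero_le_mult_iff)
  also have "\<dots> \<le> sqrt (C * dist x y)"
    using lipschitz_onD[OF assms(1,3,4)] by (simp add: dist_real_def)
  finally show ?thesis .
qed

lemma uniformly_equicontinuous_if_sqrt_modulus: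
  fixes f :: "nat \<Rightarrow> 'a::metric_space \<Rightarrow> real"
  assumes "0 \<le> L" and modulus: "\<And>n x y. x \<in> S \<Longrightarrow> y \<in> S \<Longrightarrow> dist (f n x) (f n y) \<le> sqrt (L * dist x y)"
    and "0 < e"
  shows "\<exists>d>0. \<forall>n. \<forall>x\<in>S. \<forall>y\<in>S. dist x y < d \<longrightarrow> dist (f n x) (f n y) \<le> e"
proof (intro exI[of _ "e\<^sup>2 / (L + 1)"] conjI allI ballI impI)
  show "0 < e\<^sup>2 / (L + 1)"
    using \<open>0 < e\<close> \<open>0 \<le> L\<close> by simp
  fix n x y assume "x \<in> S" "y \<in> S" and "dist x y < e\<^sup>2 / (L + 1)"
  then have "(L + 1) * dist x y < e\<^sup>2"
    using \<open>0 \<le> L\<close> by (simp add: field_simps)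
  then have "L * dist x y \<le> e\<^sup>2"
    unfolding distrib_right using zero_le_dist[of x y] by linarith
  then have "sqrt (L * dist x y) \<le> e"
    using \<open>0 < e\<close> real_le_lsqrt by auto
  then show "dist (f n x) (f n y) \<le> e"
    using modulus[OF \<open>x \<in> S\<close> \<open>y \<in> S\<close>, of n] by linarith
qed

lemma uniform_limit_if_equicontinuous:
  fixes f :: "nat \<Rightarrow> 'a::metric_space \<Rightarrow> 'b::metric_space"
  assumes "compact S"
    and equicont: "\<And>e. 0 < e \<Longrightarrow> \<exists>d>0. \<forall>n. \<forall>x\<in>S. \<forall>y\<in>S. dist x y < d \<longrightarrow> dist (f n x) (f n y) \<le> e"
    and lim: "\<And>x. x \<in> S \<Longrightarrow> (\<lambda>n. f n x) \<longlonglongrightarrow> g x"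
  shows "uniform_limit S f g sequentially"
proof (rule uniform_limitI)
  fix e :: real
  assume "0 < e"
  then obtain d where "0 < d"
    and d: "\<And>n x y. x \<in> S \<Longrightarrow> y \<in> S \<Longrightarrow> dist x y < d \<Longrightarrow> dist (f n x) (f n y) \<le> e/4"
    using equicont[of "e/4"] by auto
  have g_close: "dist (g x) (g y) \<le> e/4" if "x \<in> S" "y \<in> S" "dist x y < d" for x y
    using d[OF that] by (intro tendsto_upperbound[OF tendsto_dist[OF lim lim]]) (auto simp: that)
  obtain C where "C \<subseteq> S" "finite C" and cover: "S \<subseteq> (\<Union>c\<in>C. ball c d)"
    using compactE_image[OF \<open>compact S\<close>, of S "\<lambda>c. ball c d"] \<open>0 < d\<close> by force
  have "\<forall>\<^sub>F n in sequentially. \<forall>c\<in>C. dist (f n c) (g c) < e/4"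
    using \<open>finite C\<close> \<open>C \<subseteq> S\<close> \<open>0 < e\<close>
    by (intro eventually_ball_finite ballI tendstoD[OF lim]) auto
  then show "\<forall>\<^sub>F n in sequentially. \<forall>x\<in>S. dist (f n x) (g x) < e"
  proof eventually_elim
    case (elim n)
    show ?case
    proof
      fix x assume "x \<in> S"
      then obtain c where "c \<in> C" "dist c x < d"
        using cover by auto
      with \<open>C \<subseteq> S\<close> \<open>x \<in> S\<close> have "dist (f n x) (f n c) \<le> e/4" "dist (g c) (g x) \<le> e/4"
        using d[of x c n] g_close[of c x] by (auto simp: dist_commute)
      moreover have "dist (f n c) (g c) < e/4"
        using elim \<open>c \<in> C\<close> by blast
      ultimately show "dist (f n x) (g x) < e"
        using dist_triangle[of "f n x" "g x" "f n c"] dist_triangle[of "f n c" "g x" "g c"] \<open>0 < e\<close>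
        by linarith
    qed
  qed
qed

lemma has_field_derivative_uniform_limit:
  fixes f :: "nat \<Rightarrow> 'a \<Rightarrow> 'a::{real_normed_field,banach}"
  assumes "convex S"
    and der: "\<And>n x. x \<in> S \<Longrightarrow> (f n has_field_derivative f' n x) (at x within S)"
    and unif: "uniform_limit S f' g' sequentially"
    and lim: "\<And>x. x \<in> S \<Longrightarrow> (\<lambda>n. f n x) \<longlonglongrightarrow> g x"
    and "x \<in> S"
  shows "(g has_field_derivative g' x) (at x within S)"
proof -
  have "\<exists>g2. \<forall>x\<in>S. (\<lambda>n. f n x) \<longlonglongrightarrow> g2 x \<and> (g2 has_derivative (\<lambda>h. g' x * h)) (at x within S)"
  proof (rule has_derivative_sequence[OF \<open>convex S\<close> _ _ \<open>x \<in> S\<close>])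
    show "(\<lambda>n. f n x) \<longlonglongrightarrow> g x"
      using lim \<open>x \<in> S\<close> .
    show "(f n has_derivative (\<lambda>h. f' n x * h)) (at x within S)" if "x \<in> S" for n x
      using der[OF that] by (simp add: has_field_derivative_def)
    show "\<forall>\<^sub>F n in sequentially. \<forall>x\<in>S. \<forall>h. norm (f' n x * h - g' x * h) \<le> e * norm h"
      if "0 < e" for e
      using uniform_limitD[OF unif that]
      by eventually_elim
        (metis dist_norm left_diff_distrib less_imp_le mult_right_mono norm_ge_zero norm_mult)
  qed
  then obtain g2 where g2: "\<And>x. x \<in> S \<Longrightarrow> (\<lambda>n. f n x) \<longlonglongrightarrow> g2 x"
    "\<And>x. x \<in> S \<Longrightarrow> (g2 has_derivative (\<lambda>h. g' x * h)) (at x within S)"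
    by blast
  have "g y = g2 y" if "y \<in> S" for y
    using LIMSEQ_unique[OF lim g2(1)] that by blast
  then show ?thesis
    unfolding has_field_derivative_def
    using has_derivative_transform[OF \<open>x \<in> S\<close>] g2(2)[OF \<open>x \<in> S\<close>] by blast
qed

lemma differentiable_on_continuous_deriv:
  fixes f :: "real \<Rightarrow> real"
  assumes "\<And>x. x \<in> S \<Longrightarrow> (f has_real_derivative f' x) (at x)" and "continuous_on S f'"
  shows "f differentiable_on S \<and> continuous_on S (deriv f)"
proof
  show "f differentiable_on S"
    using assms(1) has_field_derivative_at_within
    unfolding differentiable_on_def real_differentiable_def by blast
  show "continuous_on S (deriv f)"
    using assms(2) by (rule continuous_on_eq) (use assms(1) DERIV_imp_deriv in metis)
qed

lemma monotone_sequence_between_continuous_bounds: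
  fixes z :: "nat \<Rightarrow> real \<Rightarrow> real"
  assumes "a < b" and cont: "\<And>n. continuous_on {a..b} (z n)"
    and neg: "\<And>n x. x \<in> {a<..<b} \<Longrightarrow> z n x < 0"
    and cases: "(\<exists>v. continuous_on {a..b} v \<and>
                   (\<forall>n. \<forall>x\<in>{a<..<b}. z n x \<le> z (Suc n) x) \<and>
                   (\<forall>n. \<forall>x\<in>{a<..<b}. z n x \<le> v x \<and> v x < 0))
              \<or> (\<exists>w. continuous_on {a..b} w \<and>
                   (\<forall>n. \<forall>x\<in>{a<..<b}. z (Suc n) x \<le> z n x) \<and>
                   (\<forall>n. \<forall>x\<in>{a<..<b}. w x \<le> z n x))"
  obtains lo up where "continuous_on {a..b} lo" and "continuous_on {a..b} up"
    and "\<And>x. x \<in> {a<..<b} \<Longrightarrow> up x < 0"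
    and "\<And>n x. x \<in> {a..b} \<Longrightarrow> lo x \<le> z n x \<and> z n x \<le> up x"
    and "\<And>x. x \<in> {a..b} \<Longrightarrow> monoseq (\<lambda>n. z n x)"
  using cases
proof (elim disjE exE conjE)
  fix v assume v: "continuous_on {a..b} v" and inc: "\<forall>n. \<forall>x\<in>{a<..<b}. z n x \<le> z (Suc n) x"
    and le_v: "\<forall>n. \<forall>x\<in>{a<..<b}. z n x \<le> v x \<and> v x < 0"
  have "incseq (\<lambda>n. z n x)" if "x \<in> {a..b}" for x
    unfolding incseq_Suc_iff
    using le_on_Icc_if_le_on_Ioo[OF \<open>a < b\<close> cont cont] inc that by blast
  moreover have "z n x \<le> v x" if "x \<in> {a..b}" for n x
    using le_on_Icc_if_le_on_Ioo[OF \<open>a < b\<close> cont v] le_v that by blast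
  ultimately show thesis
    using that[of "z 0" v, OF cont v] le_v by (auto simp: incseq_def monoseq_iff)
next
  fix w assume w: "continuous_on {a..b} w" and dec: "\<forall>n. \<forall>x\<in>{a<..<b}. z (Suc n) x \<le> z n x"
    and ge_w: "\<forall>n. \<forall>x\<in>{a<..<b}. w x \<le> z n x"
  have "decseq (\<lambda>n. z n x)" if "x \<in> {a..b}" for x
    unfolding decseq_Suc_iff
    using le_on_Icc_if_le_on_Ioo[OF \<open>a < b\<close> cont cont] dec that by blast
  moreover have "w x \<le> z n x" if "x \<in> {a..b}" for n x
    using le_on_Icc_if_le_on_Ioo[OF \<open>a < b\<close> w cont] ge_w that by blast
  ultimately show thesis
    using that[of w "z 0", OF w cont] neg by (auto simp: decseq_def monoseq_iff)
qed

lemma uniformly_bounded_between_continuous: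
  fixes f :: "nat \<Rightarrow> 'a::topological_space \<Rightarrow> real"
  assumes "compact S" and "continuous_on S lo" and "continuous_on S up"
    and "\<And>n x. x \<in> S \<Longrightarrow> lo x \<le> f n x \<and> f n x \<le> up x"
  obtains B where "\<And>n x. x \<in> S \<Longrightarrow> \<bar>f n x\<bar> \<le> B"
proof -
  obtain Bl where Bl: "\<And>x. x \<in> S \<Longrightarrow> \<bar>lo x\<bar> \<le> Bl"
    using continuous_on_compact_bound[OF assms(1,2)] by auto
  obtain Bu where Bu: "\<And>x. x \<in> S \<Longrightarrow> \<bar>up x\<bar> \<le> Bu"
    using continuous_on_compact_bound[OF assms(1,3)] by auto
  have "\<bar>f n x\<bar> \<le> Bl + Bu" if "x \<in> S" for n x
    using assms(4)[OF that, of n] Bl[OF that] Bu[OF that] by linarith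
  then show thesis
    using that by blast
qed

lemma pointwise_limit_if_monotone_bounded:
  fixes f :: "nat \<Rightarrow> 'a \<Rightarrow> real"
  assumes "\<And>x. x \<in> S \<Longrightarrow> monoseq (\<lambda>n. f n x)" and "\<And>n x. x \<in> S \<Longrightarrow> \<bar>f n x\<bar> \<le> B"
  obtains g where "\<And>x. x \<in> S \<Longrightarrow> (\<lambda>n. f n x) \<longlonglongrightarrow> g x"
proof -
  have "\<forall>x\<in>S. \<exists>l. (\<lambda>n. f n x) \<longlonglongrightarrow> l"
  proof
    fix x assume x: "x \<in> S"
    have "Bseq (\<lambda>n. f n x)"
      using assms(2)[OF x] by (intro BseqI') simp
    then show "\<exists>l. (\<lambda>n. f n x) \<longlonglongrightarrow> l"
      using Bseq_monoseq_convergent assms(1)[OF x] unfolding convergent_def by blast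
  qed
  from bchoice[OF this] obtain g where "\<forall>x\<in>S. (\<lambda>n. f n x) \<longlonglongrightarrow> g x"
    by blast
  then show thesis
    using that by blast
qed

lemma square_lipschitz_if_riccati:
  fixes z h q :: "real \<Rightarrow> real"
  assumes "a < b" and "continuous_on {a..b} z"
    and ode: "\<And>x. x \<in> {a<..<b} \<Longrightarrow> (z has_real_derivative (h x - c - q x / z x)) (at x)"
    and nz: "\<And>x. x \<in> {a<..<b} \<Longrightarrow> z x \<noteq> 0"
    and B: "\<And>x. x \<in> {a<..<b} \<Longrightarrow> \<bar>z x\<bar> \<le> B"
    and M: "\<And>x. x \<in> {a<..<b} \<Longrightarrow> \<bar>h x - c\<bar> \<le> M"
    and Q: "\<And>x. x \<in> {a<..<b} \<Longrightarrow> \<bar>q x\<bar> \<le> Q"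
    and "0 \<le> B" "0 \<le> M" "0 \<le> Q"
  shows "(2 * (B * M + Q))-lipschitz_on {a..b} (\<lambda>x. (z x)\<^sup>2)"
proof (rule lipschitz_on_Icc_if_deriv_bounded)
  show "continuous_on {a..b} (\<lambda>x. (z x)\<^sup>2)"
    using assms(2) by (intro continuous_intros)
  show "((\<lambda>x. (z x)\<^sup>2) has_real_derivative 2 * (z x * (h x - c) - q x)) (at x)"
    if "x \<in> {a<..<b}" for x
    by (rule DERIV_cong[OF DERIV_power[OF ode[OF that], of 2]]) (use nz[OF that] in \<open>simp add: field_simps\<close>)
  show "\<bar>2 * (z x * (h x - c) - q x)\<bar> \<le> 2 * (B * M + Q)" if "x \<in> {a<..<b}" for x
  proof -
    have "\<bar>z x * (h x - c)\<bar> \<le> B * M"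
      unfolding abs_mult using B[OF that] M[OF that] \<open>0 \<le> M\<close> by (intro mult_mono) auto
    then show ?thesis
      using Q[OF that] by (simp add: abs_le_iff)
  qed
qed (use assms in auto)

lemma riccati_solutions_uniformly_equicontinuous:
  fixes z :: "nat \<Rightarrow> real \<Rightarrow> real" and c :: "nat \<Rightarrow> real"
  assumes "a < b" and cont: "\<And>n. continuous_on {a..b} (z n)"
    and ode: "\<And>n x. x \<in> {a<..<b} \<Longrightarrow> (z n has_real_derivative (h x - c n - q x / z n x)) (at x)"
    and neg: "\<And>n x. x \<in> {a<..<b} \<Longrightarrow> z n x < 0"
    and B: "\<And>n x. x \<in> {a..b} \<Longrightarrow> \<bar>z n x\<bar> \<le> B"
    and h: "continuous_on {a..b} h" and q: "continuous_on {a..b} q" and "Bseq c"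
    and "0 < e"
  shows "\<exists>d>0. \<forall>n. \<forall>x\<in>{a..b}. \<forall>y\<in>{a..b}. dist x y < d \<longrightarrow> dist (z n x) (z n y) \<le> e"
proof -
  obtain H where "0 \<le> H" and H: "\<And>x. x \<in> {a..b} \<Longrightarrow> \<bar>h x\<bar> \<le> H"
    using continuous_on_compact_bound[OF compact_Icc h] by auto
  obtain Q where "0 \<le> Q" and Q: "\<And>x. x \<in> {a..b} \<Longrightarrow> \<bar>q x\<bar> \<le> Q"
    using continuous_on_compact_bound[OF compact_Icc q] by auto
  obtain C where "0 < C" and C: "\<And>n. \<bar>c n\<bar> \<le> C"
    using \<open>Bseq c\<close> by (auto elim: BseqE)
  have "0 \<le> B"
    using B[of a 0] \<open>a < b\<close> by auto
  define L where "L = 2 * (B * (H + C) + Q)"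
  have "0 \<le> L"
    unfolding L_def using \<open>0 \<le> B\<close> \<open>0 \<le> H\<close> \<open>0 < C\<close> \<open>0 \<le> Q\<close> by simp
  have "L-lipschitz_on {a..b} (\<lambda>x. (z n x)\<^sup>2)" for n
    unfolding L_def
  proof (rule square_lipschitz_if_riccati[OF \<open>a < b\<close> cont ode])
    show "z n x \<noteq> 0" "\<bar>z n x\<bar> \<le> B" if "x \<in> {a<..<b}" for x
      using neg[of x n] B[of x n] that by auto
    show "\<bar>h x - c n\<bar> \<le> H + C" "\<bar>q x\<bar> \<le> Q" if "x \<in> {a<..<b}" for x
      using H[of x] C[of n] Q[of x] that by auto
  qed (use \<open>0 \<le> B\<close> \<open>0 \<le> H\<close> \<open>0 < C\<close> \<open>0 \<le> Q\<close> in auto)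
  moreover have "z n x \<le> 0" if "x \<in> {a..b}" for n x
    using le_on_Icc_if_le_on_Ioo[OF \<open>a < b\<close> cont continuous_on_const] neg that
    by (meson less_imp_le)
  ultimately have "dist (z n x) (z n y) \<le> sqrt (L * dist x y)"
    if "x \<in> {a..b}" "y \<in> {a..b}" for n x y
    using dist_le_sqrt_if_square_lipschitz that by blast
  then show ?thesis
    using uniformly_equicontinuous_if_sqrt_modulus[OF \<open>0 \<le> L\<close> _ \<open>0 < e\<close>] by blast
qed

lemma riccati_limit_has_derivative_within:
  fixes z :: "nat \<Rightarrow> real \<Rightarrow> real"
  assumes unif: "uniform_limit {a..b} z zb sequentially"
    and zb: "continuous_on {a..b} zb" and nz: "\<And>x. x \<in> {a..b} \<Longrightarrow> zb x \<noteq> 0"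
    and q: "continuous_on {a..b} q" and c: "c \<longlonglongrightarrow> c0"
    and ode: "\<And>n x. x \<in> {a..b} \<Longrightarrow>
               (z n has_real_derivative (h x - c n - q x / z n x)) (at x within {a..b})"
    and x: "x \<in> {a..b}"
  shows "(zb has_real_derivative (h x - c0 - q x / zb x)) (at x within {a..b})"
proof (rule has_field_derivative_uniform_limit[OF _ ode _ _ x])
  obtain m where "m \<in> {a..b}" and m: "\<And>y. y \<in> {a..b} \<Longrightarrow> \<bar>zb m\<bar> \<le> \<bar>zb y\<bar>"
    using continuous_attains_inf[OF compact_Icc _ continuous_on_rabs[OF zb]] x by auto
  have "uniform_limit {a..b} (\<lambda>n y. q y / z n y) (\<lambda>y. q y / zb y) sequentially"
  proof (rule uniform_lim_divide[OF uniform_limit_const unif])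
    show "bounded (q ` {a..b})"
      by (rule compact_imp_bounded[OF compact_continuous_image[OF q compact_Icc]])
  qed (use m nz \<open>m \<in> {a..b}\<close> in auto)
  moreover have "uniform_limit {a..b} (\<lambda>n y. c n) (\<lambda>y. c0) sequentially"
    using tendstoD[OF c] by (auto simp: uniform_limit_iff elim: eventually_mono)
  ultimately show "uniform_limit {a..b} (\<lambda>n y. h y - c n - q y / z n y) (\<lambda>y. h y - c0 - q y / zb y) sequentially"
    by (intro uniform_limit_intros)
  show "(\<lambda>n. z n y) \<longlonglongrightarrow> zb y" if "y \<in> {a..b}" for y
    using tendsto_uniform_limitI[OF unif that] .
qed simp

lemma riccati_limit_has_derivative:
  fixes z :: "nat \<Rightarrow> real \<Rightarrow> real"
  assumes unif: "uniform_limit {a..b} z zb sequentially"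
    and zb: "continuous_on {a..b} zb" and nz: "\<And>x. x \<in> {a<..<b} \<Longrightarrow> zb x \<noteq> 0"
    and q: "continuous_on {a..b} q" and c: "c \<longlonglongrightarrow> c0"
    and ode: "\<And>n x. x \<in> {a<..<b} \<Longrightarrow> (z n has_real_derivative (h x - c n - q x / z n x)) (at x)"
    and x: "x \<in> {a<..<b}"
  shows "(zb has_real_derivative (h x - c0 - q x / zb x)) (at x)"
proof -
  define a' b' where "a' = (a + x) / 2" and "b' = (x + b) / 2"
  have "a' < x" "x < b'" and sub: "{a'..b'} \<subseteq> {a<..<b}"
    using x unfolding a'_def b'_def by auto
  have sub': "{a'..b'} \<subseteq> {a..b}"
    using sub by fastforce
  have "(zb has_real_derivative (h x - c0 - q x / zb x)) (at x within {a'..b'})"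
  proof (rule riccati_limit_has_derivative_within[OF _ _ _ _ c])
    show "uniform_limit {a'..b'} z zb sequentially"
      using uniform_limit_on_subset[OF unif sub'] .
    show "continuous_on {a'..b'} zb" "continuous_on {a'..b'} q"
      using continuous_on_subset[OF zb sub'] continuous_on_subset[OF q sub'] .
    show "(z n has_real_derivative (h y - c n - q y / z n y)) (at y within {a'..b'})"
      if "y \<in> {a'..b'}" for n y
      using ode[of y n] sub that by (blast intro: has_field_derivative_at_within)
  qed (use nz sub \<open>a' < x\<close> \<open>x < b'\<close> in auto)
  then show ?thesis
    using at_within_Icc_at[OF \<open>a' < x\<close> \<open>x < b'\<close>] by simp
qed

theorem lemma3p3:
  fixes h q :: "real \<Rightarrow> real" and c :: "nat \<Rightarrow> real" and c0 :: real
    and z :: "nat \<Rightarrow> real \<Rightarrow> real"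
  assumes h_cont: "continuous_on {0..1} h"
    and q_cont: "continuous_on {0..1} q"
    and q_pos: "\<And>x. x \<in> {0<..<1} \<Longrightarrow> q x > 0"
    and c_lim: "c \<longlonglongrightarrow> c0"
    and z_cont: "\<And>n. continuous_on {0..1} (z n)"
    and z_C1: "\<And>n. z n differentiable_on {0<..<1} \<and> continuous_on {0<..<1} (deriv (z n))"
    and z_ode: "\<And>n x. x \<in> {0<..<1} \<Longrightarrow>
                 (z n has_real_derivative (h x - c n - q x / z n x)) (at x)"
    and z_neg: "\<And>n x. x \<in> {0<..<1} \<Longrightarrow> z n x < 0"
    and cases: "(\<exists>v. continuous_on {0..1} v \<and>
                   (\<forall>n. \<forall>x\<in>{0<..<1}. z n x \<le> z (Suc n) x) \<and>
                   (\<forall>n. \<forall>x\<in>{0<..<1}. z n x \<le> v x \<and> v x < 0))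
              \<or> (\<exists>w. continuous_on {0..1} w \<and>
                   (\<forall>n. \<forall>x\<in>{0<..<1}. z (Suc n) x \<le> z n x) \<and>
                   (\<forall>n. \<forall>x\<in>{0<..<1}. w x \<le> z n x))"
  shows "\<exists>zb. uniform_limit {0..1} z zb sequentially
            \<and> continuous_on {0..1} zb
            \<and> zb differentiable_on {0<..<1} \<and> continuous_on {0<..<1} (deriv zb)
            \<and> (\<forall>x\<in>{0<..<1}. (zb has_real_derivative (h x - c0 - q x / zb x)) (at x))
            \<and> (\<forall>x\<in>{0<..<1}. zb x < 0)"
proof -
  obtain lo up where lo: "continuous_on {0..1} lo" and up: "continuous_on {0..1} up"
    and up_neg: "\<And>x. x \<in> {0<..<1} \<Longrightarrow> up x < 0"
    and between: "\<And>n x. x \<in> {0..1} \<Longrightarrow> lo x \<le> z n x \<and> z n x \<le> up x"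
    and mono: "\<And>x. x \<in> {0..1} \<Longrightarrow> monoseq (\<lambda>n. z n x)"
    using monotone_sequence_between_continuous_bounds[OF zero_less_one z_cont z_neg cases] by blast
  obtain B where bound: "\<And>n x. x \<in> {0..1} \<Longrightarrow> \<bar>z n x\<bar> \<le> B"
    using uniformly_bounded_between_continuous[where f = z, OF compact_Icc lo up between] by blast
  obtain zb where lim: "\<And>x. x \<in> {0..1} \<Longrightarrow> (\<lambda>n. z n x) \<longlonglongrightarrow> zb x"
    using pointwise_limit_if_monotone_bounded[where f = z, OF mono bound] by blast
  have unif: "uniform_limit {0..1} z zb sequentially"
    using riccati_solutions_uniformly_equicontinuous[OF zero_less_one z_cont z_ode z_neg bound h_cont q_cont
        convergent_imp_Bseq[OF convergentI[OF c_lim]]]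
    by (rule uniform_limit_if_equicontinuous[OF compact_Icc _ lim])
  have zb_cont: "continuous_on {0..1} zb"
    by (rule uniform_limit_theorem[OF _ unif]) (use z_cont in auto)
  have zb_neg: "zb x < 0" if "x \<in> {0<..<1}" for x
    using LIMSEQ_le_const2[OF lim, of x "up x"] between[of x] up_neg[OF that] that by fastforce
  have zb_ode: "(zb has_real_derivative (h x - c0 - q x / zb x)) (at x)" if "x \<in> {0<..<1}" for x
    by (rule riccati_limit_has_derivative[OF unif zb_cont _ q_cont c_lim z_ode that])
      (use zb_neg in fastforce)
  have sub: "{0<..<1} \<subseteq> {0..1::real}"
    by auto
  have "continuous_on {0<..<1} (\<lambda>x. h x - c0 - q x / zb x)"
    by (intro continuous_intros continuous_on_subset[OF h_cont sub] continuous_on_subset[OF q_cont sub]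
        continuous_on_subset[OF zb_cont sub]) (use zb_neg in fastforce)
  then show ?thesis
    using differentiable_on_continuous_deriv[OF zb_ode] unif zb_cont zb_ode zb_neg by blast
qed

end
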